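(* Let $t_1,x_1,t_2,x_2,b$ satisfy $0<t_1<t_2$, $\frac{x_1}{t_1}>\frac{x_2}{t_2}$, $0\le b\le\frac{(x_2-x_1)^2}{t_2-t_1}+\frac{x_1^2}{t_1}-\frac{x_2^2}{t_2}$. Let $(F,\rho)$ be a feasible pair minimizing $I_2$, with $F$ concave, $F'(t)\le\frac{F(t)}{t}$ on $[t_1,t_2]$, and $\rho$ nonincreasing, and let $g=g(F,\rho,b)$. If $g(t)=0$ for all $t\in[s_1,s_2]\subset[t_1,t_2]$, then on this interval $F(t)=c_1\sqrt t+c_2t$ for some constants $c_1,c_2$, and $\rho(t)=\left(\frac{F(t)}{t}-F'(t)\right)^2$.
   Context: A pair $(F,\rho)$ is feasible if $F:[t_1,t_2]\to\mathbb R$ is absolutely continuous with $F(t_1)=x_1$, $F(t_2)=x_2$, $\rho:[t_1,t_2]\to[0,\infty)$ is Lebesgue measurable, and $g(F,\rho,b)(t):=b-\frac{F(t_1)^2}{t_1}+\int_{t_1}^t(\rho(\tau)-F'(\tau)^2)d\tau+\frac{F(t)^2}{t}\ge0$ for all $t\in[t_1,t_2]$. $I_2(F,\rho)=\frac43\int_{t_1}^{t_2}\rho^{3/2}dt$. *)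

theory Defs
  imports "HOL-Analysis.Analysis"
begin

definition abs_cont_on :: "real \<Rightarrow> real \<Rightarrow> (real \<Rightarrow> real) \<Rightarrow> bool" where
  "abs_cont_on a b F \<longleftrightarrow>
     (\<forall>\<epsilon>>0. \<exists>\<delta>>0. \<forall>(n::nat) (u::nat \<Rightarrow> real) v.
        (\<forall>i<n. a \<le> u i \<and> u i \<le> v i \<and> v i \<le> b) \<and>
        (\<forall>i<n. \<forall>j<n. i \<noteq> j \<longrightarrow> v i \<le> u j \<or> v j \<le> u i) \<and>
        (\<Sum>i<n. v i - u i) < \<delta>
        \<longrightarrow> (\<Sum>i<n. \<bar>F (v i) - F (u i)\<bar>) < \<epsilon>)"

text \<open>g(F,rho,b)(t); F' is the (a.e. existing) derivative of F.\<close>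
definition gfun :: "real \<Rightarrow> (real \<Rightarrow> real) \<Rightarrow> (real \<Rightarrow> real) \<Rightarrow> real \<Rightarrow> real \<Rightarrow> real" where
  "gfun t1 F \<rho> b t =
     b - (F t1)\<^sup>2 / t1 + integral {t1..t} (\<lambda>\<tau>. \<rho> \<tau> - (deriv F \<tau>)\<^sup>2) + (F t)\<^sup>2 / t"

definition feasible :: "real \<Rightarrow> real \<Rightarrow> real \<Rightarrow> real \<Rightarrow> real \<Rightarrow> (real \<Rightarrow> real) \<Rightarrow> (real \<Rightarrow> real) \<Rightarrow> bool" where
  "feasible t1 x1 t2 x2 b F \<rho> \<longleftrightarrow>
     abs_cont_on t1 t2 F \<and> F t1 = x1 \<and> F t2 = x2 \<and>
     \<rho> \<in> borel_measurable (lebesgue_on {t1..t2}) \<and> (\<forall>t\<in>{t1..t2}. 0 \<le> \<rho> t) \<and>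
     (\<lambda>\<tau>. \<rho> \<tau> - (deriv F \<tau>)\<^sup>2) absolutely_integrable_on {t1..t2} \<and>
     (\<forall>t\<in>{t1..t2}. gfun t1 F \<rho> b t \<ge> 0)"

definition I2 :: "real \<Rightarrow> real \<Rightarrow> (real \<Rightarrow> real) \<Rightarrow> ennreal" where
  "I2 t1 t2 \<rho> = ennreal (4/3) * (\<integral>\<^sup>+ t. indicator {t1..t2} t * ennreal (\<rho> t powr (3/2)) \<partial>lborel)"

end

(*
  On [s1,s2] the identity g = 0 says that the integral of rho - F'^2 from t1 to t equals
  F(t1)^2/t1 - b - F(t)^2/t, so rho = (F/t - F')^2 wherever F is differentiable and rho
  continuous; as F' <= F/t this means sqrt rho / t = -(F/t)'.

  Let H = c1 sqrt t + c2 t agree with F at s1 and s2 and put alpha = H/t - H' = c1/(2 sqrt t).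
  Replacing (F, rho) on [s1,s2] by (H, alpha^2) keeps g = 0 there and leaves g unchanged
  elsewhere, so the new pair is feasible and minimality gives
  int rho^(3/2) <= int alpha^3 over [s1,s2]. With y = sqrt rho,
  y^3 - alpha^3 - 3 alpha^2 (y - alpha) = (y - alpha)^2 (y + 2 alpha) >= 0, and the linear term
  integrates to zero because 3 alpha^2 = 3 c1^2 / (4t) while sqrt rho / t and alpha / t have the
  same integral. Hence sqrt rho = alpha at all continuity points of rho; integrating
  -(F/t)' = sqrt rho / t then gives F = H, and monotonicity of rho gives rho = alpha^2 on all
  of (s1,s2).

  A concave F is differentiable off the countable set of jumps of its antitone right
  derivative; therefore all fundamental-theorem arguments allow countable exceptional sets.
*)

theory Submission
  imports Defs
begin

section \<open>Real functions with derivatives off a countable set\<close>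

lemma countable_imp_negligible: "countable (S :: real set) \<Longrightarrow> negligible S"
  by (auto simp: negligible_iff_null_sets intro: null_sets_completionI countable_imp_null_set_lborel)

lemma DERIV_pos_off_countable_imp_le:
  fixes K :: "real \<Rightarrow> real"
  assumes "a \<le> b" "continuous_on {a..b} K" "countable C"
    and der: "\<And>x. x \<in> {a<..<b} - C \<Longrightarrow> \<exists>k>0. (K has_real_derivative k) (at x)"
  shows "K a \<le> K b"
proof (rule ccontr)
  assume "\<not> K a \<le> K b"
  then have lt: "K b < K a" by simp
  \<comment> \<open>Take a level y strictly between K b and K a that K attains at no point of C, and the
    last point m where K = y. There K has a positive derivative, so K exceeds y just right
    of m, and the intermediate value theorem gives a later point at level y.\<close>
  obtain y where y: "y \<in> {K b<..<K a}" "y \<notin> K ` C"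
    using real_interval_avoid_countable_set[OF lt countable_image[OF \<open>countable C\<close>]] by blast
  define S where "S = {x \<in> {a..b}. K x = y}"
  have "closed S" unfolding S_def
    by (rule continuous_closed_preimage_constant[OF assms(2)]) simp
  moreover obtain x0 where "a \<le> x0" "x0 \<le> b" "K x0 = y"
    using IVT2'[of K b y a, OF _ _ assms(1,2)] y(1) by auto
  then have "S \<noteq> {}" unfolding S_def by auto
  moreover have "bdd_above S" unfolding S_def by (auto intro: bdd_aboveI[where M=b])
  ultimately have "Sup S \<in> S" using closed_contains_Sup by blast
  define m where "m = Sup S"
  have m: "a \<le> m" "m \<le> b" "K m = y" using \<open>Sup S \<in> S\<close> unfolding S_def m_def by auto
  have "m \<noteq> a" "m \<noteq> b" "m \<notin> C" using m y by auto
  then have "m \<in> {a<..<b} - C" using m by auto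
  then obtain k where "k > 0" "(K has_real_derivative k) (at m)" using der by blast
  then obtain d where d: "d > 0" "\<And>h. h > 0 \<Longrightarrow> h < d \<Longrightarrow> K m < K (m + h)"
    using DERIV_pos_inc_right by blast
  define h where "h = min (d/2) ((b - m)/2)"
  have h: "h > 0" "h < d" "m + h < b"
    using d(1) \<open>m \<in> {a<..<b} - C\<close> unfolding h_def by (auto simp: min_def field_simps)
  have "continuous_on {m+h..b} K"
    by (rule continuous_on_subset[OF assms(2)]) (use m h in auto)
  then obtain z where z: "m + h \<le> z" "z \<le> b" "K z = y"
    using IVT2'[of K b y "m+h"] d(2)[OF h(1,2)] m y(1) h(3) by auto
  then have "z \<in> S" using m h unfolding S_def by auto
  then have "z \<le> m" unfolding m_def using \<open>bdd_above S\<close> by (rule cSup_upper)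
  then show False using z h by simp
qed

lemma DERIV_nonneg_off_countable_imp_le:
  fixes K :: "real \<Rightarrow> real"
  assumes "a \<le> b" "continuous_on {a..b} K" "countable C"
    and der: "\<And>x. x \<in> {a<..<b} - C \<Longrightarrow> \<exists>k\<ge>0. (K has_real_derivative k) (at x)"
  shows "K a \<le> K b"
proof (rule field_le_epsilon)
  fix e :: real assume "e > 0"
  define e' where "e' = e / (b - a + 1)"
  have "e' > 0" using \<open>e > 0\<close> assms(1) by (simp add: e'_def)
  have "K a + e' * a \<le> K b + e' * b"
  proof (rule DERIV_pos_off_countable_imp_le[OF assms(1) _ assms(3)])
    show "continuous_on {a..b} (\<lambda>x. K x + e' * x)"
      by (intro continuous_intros assms(2))
    fix x assume "x \<in> {a<..<b} - C"
    then obtain k where "k \<ge> 0" "(K has_real_derivative k) (at x)" using der by blast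
    then have "((\<lambda>x. K x + e' * x) has_real_derivative k + e') (at x)"
      by (auto intro!: derivative_eq_intros)
    then show "\<exists>k>0. ((\<lambda>x. K x + e' * x) has_real_derivative k) (at x)"
      using \<open>k \<ge> 0\<close> \<open>e' > 0\<close> by (intro exI[of _ "k + e'"]) auto
  qed
  moreover have "e' * (b - a) \<le> e"
    using \<open>e > 0\<close> assms(1) by (simp add: e'_def field_simps)
  ultimately show "K a \<le> K b + e" by (simp add: algebra_simps)
qed

lemma DERIV_zero_off_countable_imp_eq:
  fixes G :: "real \<Rightarrow> real"
  assumes "a \<le> b" "continuous_on {a..b} G" "countable C"
    and der: "\<And>x. x \<in> {a<..<b} - C \<Longrightarrow> (G has_real_derivative 0) (at x)"
  shows "G b = G a"
proof -
  have "G a \<le> G b"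
    by (rule DERIV_nonneg_off_countable_imp_le[OF assms(1-3)]) (use der in blast)
  moreover have "- G a \<le> - G b"
  proof (rule DERIV_nonneg_off_countable_imp_le[OF assms(1) _ assms(3)])
    show "continuous_on {a..b} (\<lambda>x. - G x)" by (intro continuous_intros assms(2))
  qed (use der DERIV_minus in fastforce)
  ultimately show ?thesis by simp
qed

lemma integral_has_real_derivative_isCont:
  fixes g :: "real \<Rightarrow> real"
  assumes "g integrable_on {a..b}" "a < x" "x < b" "isCont g x"
  shows "((\<lambda>u. integral {a..u} g) has_real_derivative g x) (at x)"
proof -
  have "((\<lambda>u. integral {a..u} g) has_vector_derivative g x) (at x within {a..b} - {})"
    by (rule integral_has_vector_derivative_continuous_at[OF assms(1)])
       (use assms in \<open>auto intro: continuous_at_imp_continuous_within\<close>)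
  then show ?thesis
    using at_within_Icc_at[OF assms(2,3)] by (simp add: has_real_derivative_iff_has_vector_derivative)
qed

lemma fundamental_theorem_of_calculus_countable:
  fixes G g :: "real \<Rightarrow> real"
  assumes "a \<le> b" "g integrable_on {a..b}" "continuous_on {a..b} G" "countable C"
    and der: "\<And>x. x \<in> {a<..<b} - C \<Longrightarrow> (G has_real_derivative g x) (at x) \<and> isCont g x"
  shows "(g has_integral G b - G a) {a..b}"
proof -
  define P where "P x = G x - integral {a..x} g" for x
  have "P b = P a"
  proof (rule DERIV_zero_off_countable_imp_eq[OF assms(1) _ assms(4)])
    show "continuous_on {a..b} P" unfolding P_def
      by (intro continuous_intros assms(3) indefinite_integral_continuous_1 assms(2))
    fix x assume x: "x \<in> {a<..<b} - C"
    have "(P has_real_derivative g x - g x) (at x)" unfolding P_def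
      by (intro derivative_intros) (use der[OF x] integral_has_real_derivative_isCont[OF assms(2)] x in auto)
    then show "(P has_real_derivative 0) (at x)" by simp
  qed
  then have "integral {a..b} g = G b - G a" by (simp add: P_def)
  with assms(2) show ?thesis by (metis has_integral_integrable_integral)
qed

lemma indefinite_integral_DERIV_eq:
  fixes f K :: "real \<Rightarrow> real"
  assumes "f integrable_on {a..b}" "a < x" "x < b" "isCont f x"
    and "\<forall>\<^sub>F t in nhds x. integral {a..t} f = K t" "(K has_real_derivative k) (at x)"
  shows "f x = k"
proof -
  have "((\<lambda>u. integral {a..u} f) has_real_derivative k) (at x)"
    using DERIV_cong_ev[OF refl assms(5) refl] assms(6) by blast
  then show ?thesis
    using integral_has_real_derivative_isCont[OF assms(1-4)] DERIV_unique by blast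
qed

lemma nonneg_zero_integral_imp_zero_isCont:
  fixes f :: "real \<Rightarrow> real"
  assumes "f integrable_on {a..b}" "integral {a..b} f = 0" "\<And>x. x \<in> {a..b} \<Longrightarrow> 0 \<le> f x"
    and "a < x" "x < b" "isCont f x"
  shows "f x = 0"
proof (rule indefinite_integral_DERIV_eq[OF assms(1,4-6)])
  have "integral {a..t} f = 0" if "t \<in> {a<..<b}" for t
  proof -
    have "integral {a..t} f + integral {t..b} f = 0"
      using Henstock_Kurzweil_Integration.integral_combine[of a t b f] assms(1,2) that by simp
    moreover have "0 \<le> integral {a..t} f" "0 \<le> integral {t..b} f"
      using that assms(3) by (auto intro!: integral_nonneg integrable_subinterval_real[OF assms(1)])
    ultimately show ?thesis by simp
  qed
  moreover have "\<forall>\<^sub>F t in nhds x. t \<in> {a<..<b}"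
    using assms(4,5) by (intro eventually_nhds_in_open) auto
  ultimately show "\<forall>\<^sub>F t in nhds x. integral {a..t} f = 0"
    by (auto elim: eventually_mono)
qed auto

lemma antimono_on_eq_isCont_off_countable:
  fixes f g :: "real \<Rightarrow> real"
  assumes "antimono_on {l<..<m} f" "countable C" "x \<in> {l<..<m}" "isCont g x"
    and eq: "\<And>y. y \<in> {l<..<m} - C \<Longrightarrow> f y = g y"
  shows "f x = g x"
proof -
  have mono: "f v \<le> f u" if "u \<in> {l<..<m}" "v \<in> {l<..<m}" "u \<le> v" for u v
    using assms(1) that by (auto simp: monotone_on_def)
  have near: "\<exists>d>0. \<forall>y. \<bar>y - x\<bar> < d \<longrightarrow> \<bar>g y - g x\<bar> < e" if "e > 0" for e
    using assms(4) that unfolding continuous_at_eps_delta dist_real_def by blast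
  have "f x \<le> g x"
  proof (rule ccontr)
    assume "\<not> f x \<le> g x"
    then obtain d where "d > 0" and d: "\<And>y. \<bar>y - x\<bar> < d \<Longrightarrow> \<bar>g y - g x\<bar> < f x - g x"
      using near[of "f x - g x"] by auto
    obtain y where "y \<in> {max (x - d) l<..<x}" "y \<notin> C"
      using real_interval_avoid_countable_set[of "max (x - d) l" x C] assms(2,3) \<open>d > 0\<close> by auto
    then show False using d[of y] mono[of y x] eq[of y] assms(3) by auto
  qed
  moreover have "g x \<le> f x"
  proof (rule ccontr)
    assume "\<not> g x \<le> f x"
    then obtain d where "d > 0" and d: "\<And>y. \<bar>y - x\<bar> < d \<Longrightarrow> \<bar>g y - g x\<bar> < g x - f x"
      using near[of "g x - f x"] by auto
    obtain y where "y \<in> {x<..<min (x + d) m}" "y \<notin> C"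
      using real_interval_avoid_countable_set[of x "min (x + d) m" C] assms(2,3) \<open>d > 0\<close> by auto
    then show False using d[of y] mono[of x y] eq[of y] assms(3) by auto
  qed
  ultimately show ?thesis by simp
qed

lemma integrable_on_antimono_on:
  fixes f :: "real \<Rightarrow> real"
  assumes "antimono_on {a..b} f"
  shows "f integrable_on {a..b}"
proof -
  have "mono_on {a..b} (\<lambda>x. - f x)"
    using assms by (auto simp: monotone_on_def)
  then show ?thesis
    using integrable_neg[OF integrable_on_mono_on] by fastforce
qed

lemma antimono_on_ctble_discont_open:
  fixes f :: "real \<Rightarrow> real"
  assumes "open A" "antimono_on A f"
  shows "countable {x\<in>A. \<not> isCont f x}"
proof -
  have "mono_on A (\<lambda>x. - f x)"
    using assms(2) by (auto simp: monotone_on_def)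
  then have "countable {x\<in>A. \<not> isCont (\<lambda>x. - f x) x}"
    by (rule mono_on_ctble_discont_open[OF assms(1)])
  moreover have "isCont (\<lambda>x. - f x) x \<longleftrightarrow> isCont f x" for x
    using isCont_minus[of x f] isCont_minus[of x "\<lambda>x. - f x"] by auto
  ultimately show ?thesis by simp
qed

lemma concave_on_slope_le:
  fixes F :: "real \<Rightarrow> real"
  assumes "concave_on {a..b} F" "a \<le> w" "w < x" "x < y" "y \<le> b"
  shows "(F y - F x) / (y - x) \<le> (F x - F w) / (x - w)"
proof -
  have "convex_on {a..b} (\<lambda>x. - F x)" using assms(1) by (simp add: concave_on_def)
  from convex_on_slope_le[OF this, of w y x] assms(2-5)
  show ?thesis by (simp add: field_simps)
qed

lemma concave_on_antimono_derivative:
  fixes F :: "real \<Rightarrow> real"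
  assumes "concave_on {a..b} F"
  obtains R where "antimono_on {a<..<b} R"
    "\<And>x. x \<in> {a<..<b} \<Longrightarrow> isCont R x \<Longrightarrow> (F has_real_derivative R x) (at x)"
proof -
  define s where "s x y = (F y - F x) / (y - x)" for x y
  have s_sym: "s x y = s y x" for x y
    unfolding s_def by (cases "x = y") (auto simp: field_simps)
  have s_le: "s x y \<le> s w x" if "a \<le> w" "w < x" "x < y" "y \<le> b" for w x y
    unfolding s_def by (rule concave_on_slope_le[OF assms that])
  \<comment> \<open>the right derivative\<close>
  define R where "R x = Sup (s x ` {x<..b})" for x
  have R_ge: "s x y \<le> R x" if "x \<in> {a<..<b}" "y \<in> {x<..b}" for x y
    unfolding R_def using that s_le[of a x]
    by (intro cSup_upper bdd_aboveI[where M = "s a x"]) auto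
  have R_le: "R x \<le> s w x" if "x \<in> {a<..<b}" "a \<le> w" "w < x" for x w
    unfolding R_def using that s_le by (intro cSup_least) auto
  have R_between: "R y \<le> s x y \<and> s x y \<le> R x" if "x \<in> {a<..<b}" "y \<in> {a<..<b}" "x < y" for x y
    using R_ge[of x y] R_le[of y x] that by auto
  show ?thesis
  proof
    show "antimono_on {a<..<b} R"
      unfolding monotone_on_def using R_between by (fastforce simp: le_less)
  next
    fix x assume x: "x \<in> {a<..<b}" and "isCont R x"
    have "\<forall>\<^sub>F y in at x. y \<in> {a<..<b}"
      using x by (intro eventually_at_in_open') auto
    moreover have "\<forall>\<^sub>F y in at x. y \<noteq> x"
      by (simp add: eventually_at_filter)
    ultimately have "\<forall>\<^sub>F y in at x. norm (s x y - R x) \<le> \<bar>R y - R x\<bar>"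
    proof eventually_elim
      case (elim y)
      then consider "x < y" | "y < x" by linarith
      then show ?case
      proof cases
        case 1
        with R_between[OF x, of y] elim show ?thesis by auto
      next
        case 2
        with R_between[of y x] elim x s_sym[of x y] show ?thesis by auto
      qed
    qed
    moreover have "((\<lambda>y. \<bar>R y - R x\<bar>) \<longlongrightarrow> 0) (at x)"
      using \<open>isCont R x\<close> unfolding isCont_def by (auto intro: tendsto_rabs_zero simp: LIM_zero_iff)
    ultimately have "((\<lambda>y. s x y - R x) \<longlongrightarrow> 0) (at x)"
      by (rule Lim_null_comparison)
    then show "(F has_real_derivative R x) (at x)"
      unfolding has_field_derivative_iff s_def[abs_def] LIM_zero_iff .
  qed
qed

section \<open>Absolute continuity\<close>

definition interval_family :: "real \<Rightarrow> real \<Rightarrow> nat \<Rightarrow> (nat \<Rightarrow> real) \<Rightarrow> (nat \<Rightarrow> real) \<Rightarrow> bool" where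
  "interval_family a b n u v \<longleftrightarrow>
     (\<forall>i<n. a \<le> u i \<and> u i \<le> v i \<and> v i \<le> b) \<and> (\<forall>i<n. \<forall>j<n. i \<noteq> j \<longrightarrow> v i \<le> u j \<or> v j \<le> u i)"

lemma abs_cont_onI:
  assumes "\<And>\<epsilon>. 0 < \<epsilon> \<Longrightarrow> \<exists>\<delta>>0. \<forall>n u v. interval_family a b n u v \<longrightarrow>
      (\<Sum>i<n. v i - u i) < \<delta> \<longrightarrow> (\<Sum>i<n. \<bar>F (v i) - F (u i)\<bar>) < \<epsilon>"
  shows "abs_cont_on a b F"
  using assms unfolding abs_cont_on_def interval_family_def by (simp add: imp_conjL)

lemma abs_cont_onD:
  assumes "abs_cont_on a b F" "0 < \<epsilon>"
  obtains \<delta> where "0 < \<delta>" "\<And>n u v. interval_family a b n u v \<Longrightarrow>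
      (\<Sum>i<n. v i - u i) < \<delta> \<Longrightarrow> (\<Sum>i<n. \<bar>F (v i) - F (u i)\<bar>) < \<epsilon>"
proof -
  obtain \<delta> where "0 < \<delta>" and \<delta>: "\<forall>(n::nat) u v. (\<forall>i<n. a \<le> u i \<and> u i \<le> v i \<and> v i \<le> b) \<and>
      (\<forall>i<n. \<forall>j<n. i \<noteq> j \<longrightarrow> v i \<le> u j \<or> v j \<le> u i) \<and> (\<Sum>i<n. v i - u i) < \<delta> \<longrightarrow>
      (\<Sum>i<n. \<bar>F (v i) - F (u i)\<bar>) < \<epsilon>"
    using assms(1)[unfolded abs_cont_on_def, rule_format, OF assms(2)] by blast
  show ?thesis
    by (rule that[OF \<open>0 < \<delta>\<close>]) (use \<delta> in \<open>auto simp: interval_family_def\<close>)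
qed

lemma abs_cont_on_imp_continuous_on:
  assumes "abs_cont_on a b F"
  shows "continuous_on {a..b} F"
  unfolding continuous_on_iff
proof (intro ballI allI impI)
  fix x \<epsilon> :: real assume x: "x \<in> {a..b}" and "0 < \<epsilon>"
  then obtain \<delta> where "0 < \<delta>" and \<delta>: "\<And>n u v. interval_family a b n u v \<Longrightarrow>
      (\<Sum>i<n. v i - u i) < \<delta> \<Longrightarrow> (\<Sum>i<n. \<bar>F (v i) - F (u i)\<bar>) < \<epsilon>"
    using abs_cont_onD[OF assms] by blast
  have "dist (F y) (F x) < \<epsilon>" if "y \<in> {a..b}" "dist y x < \<delta>" for y
  proof -
    have "(\<Sum>i<Suc 0. \<bar>F ((\<lambda>_. max y x) i) - F ((\<lambda>_. min y x) i)\<bar>) < \<epsilon>"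
      by (rule \<delta>) (use x that in \<open>auto simp: interval_family_def dist_real_def\<close>)
    then show ?thesis
      by (cases "y \<le> x") (auto simp: dist_real_def max_def min_def abs_minus_commute)
  qed
  with \<open>0 < \<delta>\<close> show "\<exists>\<delta>>0. \<forall>y\<in>{a..b}. dist y x < \<delta> \<longrightarrow> dist (F y) (F x) < \<epsilon>"
    by blast
qed

lemma abs_cont_on_subinterval:
  assumes "abs_cont_on a b F" "a \<le> c" "d \<le> b"
  shows "abs_cont_on c d F"
proof (rule abs_cont_onI)
  fix \<epsilon> :: real assume "0 < \<epsilon>"
  then obtain \<delta> where "0 < \<delta>" and \<delta>: "\<And>n u v. interval_family a b n u v \<Longrightarrow>
      (\<Sum>i<n. v i - u i) < \<delta> \<Longrightarrow> (\<Sum>i<n. \<bar>F (v i) - F (u i)\<bar>) < \<epsilon>"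
    using abs_cont_onD[OF assms(1)] by blast
  have "interval_family a b n u v" if "interval_family c d n u v" for n u v
    using that assms(2,3) unfolding interval_family_def by force
  with \<delta> \<open>0 < \<delta>\<close> show "\<exists>\<delta>>0. \<forall>n u v. interval_family c d n u v \<longrightarrow>
      (\<Sum>i<n. v i - u i) < \<delta> \<longrightarrow> (\<Sum>i<n. \<bar>F (v i) - F (u i)\<bar>) < \<epsilon>"
    by blast
qed

lemma abs_cont_on_add:
  assumes "abs_cont_on a b f" "abs_cont_on a b g"
  shows "abs_cont_on a b (\<lambda>x. f x + g x)"
proof (rule abs_cont_onI)
  fix \<epsilon> :: real assume "0 < \<epsilon>"
  then have "0 < \<epsilon> / 2" by simp
  obtain \<delta>1 where "0 < \<delta>1" and \<delta>1: "\<And>n u v. interval_family a b n u v \<Longrightarrow>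
      (\<Sum>i<n. v i - u i) < \<delta>1 \<Longrightarrow> (\<Sum>i<n. \<bar>f (v i) - f (u i)\<bar>) < \<epsilon> / 2"
    using abs_cont_onD[OF assms(1) \<open>0 < \<epsilon> / 2\<close>] by blast
  obtain \<delta>2 where "0 < \<delta>2" and \<delta>2: "\<And>n u v. interval_family a b n u v \<Longrightarrow>
      (\<Sum>i<n. v i - u i) < \<delta>2 \<Longrightarrow> (\<Sum>i<n. \<bar>g (v i) - g (u i)\<bar>) < \<epsilon> / 2"
    using abs_cont_onD[OF assms(2) \<open>0 < \<epsilon> / 2\<close>] by blast
  have "(\<Sum>i<n. \<bar>(f (v i) + g (v i)) - (f (u i) + g (u i))\<bar>) < \<epsilon>"
    if I: "interval_family a b n u v" and small: "(\<Sum>i<n. v i - u i) < min \<delta>1 \<delta>2" for n u v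
  proof -
    have "(\<Sum>i<n. \<bar>(f (v i) + g (v i)) - (f (u i) + g (u i))\<bar>)
        \<le> (\<Sum>i<n. \<bar>f (v i) - f (u i)\<bar>) + (\<Sum>i<n. \<bar>g (v i) - g (u i)\<bar>)"
      unfolding sum.distrib[symmetric] by (rule sum_mono) linarith
    also have "\<dots> < \<epsilon> / 2 + \<epsilon> / 2"
      using small by (intro add_strict_mono \<delta>1[OF I] \<delta>2[OF I]) auto
    finally show ?thesis by simp
  qed
  then show "\<exists>\<delta>>0. \<forall>n u v. interval_family a b n u v \<longrightarrow> (\<Sum>i<n. v i - u i) < \<delta> \<longrightarrow>
      (\<Sum>i<n. \<bar>(f (v i) + g (v i)) - (f (u i) + g (u i))\<bar>) < \<epsilon>"
    using \<open>0 < \<delta>1\<close> \<open>0 < \<delta>2\<close> by (intro exI[of _ "min \<delta>1 \<delta>2"]) auto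
qed

lemma abs_cont_on_uminus:
  assumes "abs_cont_on a b f"
  shows "abs_cont_on a b (\<lambda>x. - f x)"
  using assms unfolding abs_cont_on_def by (simp add: abs_minus_commute)

lemma abs_cont_on_diff:
  assumes "abs_cont_on a b f" "abs_cont_on a b g"
  shows "abs_cont_on a b (\<lambda>x. f x - g x)"
  using abs_cont_on_add[OF assms(1) abs_cont_on_uminus[OF assms(2)]] by simp

lemma lipschitz_on_sum_increments_le:
  fixes p :: "real \<Rightarrow> real"
  assumes "L-lipschitz_on {a..b} p" "interval_family a b n u v"
  shows "(\<Sum>i<n. \<bar>p (v i) - p (u i)\<bar>) \<le> L * (\<Sum>i<n. v i - u i)"
  unfolding sum_distrib_left
proof (rule sum_mono)
  fix i assume "i \<in> {..<n}"
  then have "a \<le> u i" "u i \<le> v i" "v i \<le> b" using assms(2) by (auto simp: interval_family_def)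
  then show "\<bar>p (v i) - p (u i)\<bar> \<le> L * (v i - u i)"
    using lipschitz_onD[OF assms(1), of "v i" "u i"] by (simp add: dist_real_def)
qed

lemma interval_family_length_nonneg:
  "interval_family a b n u v \<Longrightarrow> 0 \<le> (\<Sum>i<n. v i - u i)"
  by (intro sum_nonneg) (auto simp: interval_family_def)

lemma lipschitz_on_imp_abs_cont_on:
  assumes "L-lipschitz_on {a..b} K"
  shows "abs_cont_on a b K"
proof (rule abs_cont_onI)
  fix \<epsilon> :: real assume "0 < \<epsilon>"
  have "L \<ge> 0" using assms by (rule lipschitz_on_nonneg)
  have "(\<Sum>i<n. \<bar>K (v i) - K (u i)\<bar>) < \<epsilon>"
    if I: "interval_family a b n u v" and small: "(\<Sum>i<n. v i - u i) < \<epsilon> / (L + 1)" for n u v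
  proof -
    have "(\<Sum>i<n. \<bar>K (v i) - K (u i)\<bar>) \<le> L * (\<Sum>i<n. v i - u i)"
      by (rule lipschitz_on_sum_increments_le[OF assms I])
    also have "\<dots> \<le> (L + 1) * (\<Sum>i<n. v i - u i)"
      using interval_family_length_nonneg[OF I] by (intro mult_right_mono) auto
    also have "\<dots> < \<epsilon>"
      using small \<open>L \<ge> 0\<close> by (simp add: field_simps)
    finally show ?thesis .
  qed
  then show "\<exists>\<delta>>0. \<forall>n u v. interval_family a b n u v \<longrightarrow> (\<Sum>i<n. v i - u i) < \<delta> \<longrightarrow>
      (\<Sum>i<n. \<bar>K (v i) - K (u i)\<bar>) < \<epsilon>"
    using \<open>0 < \<epsilon>\<close> \<open>L \<ge> 0\<close> by (intro exI[of _ "\<epsilon> / (L + 1)"]) auto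
qed

lemma abs_cont_on_compose:
  assumes "abs_cont_on c d F" "mono_on {a..b} p" "L-lipschitz_on {a..b} p" "p ` {a..b} \<subseteq> {c..d}"
  shows "abs_cont_on a b (\<lambda>x. F (p x))"
proof (rule abs_cont_onI)
  fix \<epsilon> :: real assume "0 < \<epsilon>"
  then obtain \<delta> where "0 < \<delta>" and \<delta>: "\<And>n u v. interval_family c d n u v \<Longrightarrow>
      (\<Sum>i<n. v i - u i) < \<delta> \<Longrightarrow> (\<Sum>i<n. \<bar>F (v i) - F (u i)\<bar>) < \<epsilon>"
    using abs_cont_onD[OF assms(1)] by blast
  have "L \<ge> 0" using assms(3) by (rule lipschitz_on_nonneg)
  have mono: "p x \<le> p y" if "x \<in> {a..b}" "y \<in> {a..b}" "x \<le> y" for x y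
    using assms(2) that by (auto simp: monotone_on_def)
  have "(\<Sum>i<n. \<bar>F (p (v i)) - F (p (u i))\<bar>) < \<epsilon>"
    if I: "interval_family a b n u v" and small: "(\<Sum>i<n. v i - u i) < \<delta> / (L + 1)" for n u v
  proof (rule \<delta>)
    have in_ab: "u i \<in> {a..b}" "v i \<in> {a..b}" "u i \<le> v i" if "i < n" for i
      using I that by (auto simp: interval_family_def)
    have "p (u i) \<in> {c..d}" "p (v i) \<in> {c..d}" if "i < n" for i
      using in_ab[OF that] assms(4) by blast+
    moreover have "p (v i) \<le> p (u j) \<or> p (v j) \<le> p (u i)" if "i < n" "j < n" "i \<noteq> j" for i j
    proof -
      have "v i \<le> u j \<or> v j \<le> u i" using I that by (auto simp: interval_family_def)
      then show ?thesis
        using mono[of "v i" "u j"] mono[of "v j" "u i"] in_ab[OF that(1)] in_ab[OF that(2)] by blast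
    qed
    ultimately show "interval_family c d n (\<lambda>i. p (u i)) (\<lambda>i. p (v i))"
      using in_ab mono unfolding interval_family_def by auto
    have "(\<Sum>i<n. p (v i) - p (u i)) \<le> (\<Sum>i<n. \<bar>p (v i) - p (u i)\<bar>)"
      by (intro sum_mono) simp
    also have "\<dots> \<le> L * (\<Sum>i<n. v i - u i)"
      by (rule lipschitz_on_sum_increments_le[OF assms(3) I])
    also have "\<dots> \<le> (L + 1) * (\<Sum>i<n. v i - u i)"
      using interval_family_length_nonneg[OF I] by (intro mult_right_mono) auto
    also have "\<dots> < \<delta>"
      using small \<open>L \<ge> 0\<close> by (simp add: field_simps)
    finally show "(\<Sum>i<n. p (v i) - p (u i)) < \<delta>" .
  qed
  then show "\<exists>\<delta>>0. \<forall>n u v. interval_family a b n u v \<longrightarrow> (\<Sum>i<n. v i - u i) < \<delta> \<longrightarrow>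
      (\<Sum>i<n. \<bar>F (p (v i)) - F (p (u i))\<bar>) < \<epsilon>"
    using \<open>0 < \<delta>\<close> \<open>L \<ge> 0\<close> by (intro exI[of _ "\<delta> / (L + 1)"]) auto
qed

lemma continuous_derivative_imp_abs_cont_on:
  fixes H H' :: "real \<Rightarrow> real"
  assumes "\<And>x. x \<in> {a..b} \<Longrightarrow> (H has_real_derivative H' x) (at x within {a..b})"
    and "continuous_on {a..b} H'"
  shows "abs_cont_on a b H"
proof -
  obtain B where B: "\<And>x. x \<in> {a..b} \<Longrightarrow> norm (H' x) \<le> B"
    using compact_imp_bounded[OF compact_continuous_image[OF assms(2) compact_Icc]]
    unfolding bounded_iff by blast
  have "(max B 0)-lipschitz_on {a..b} H"
  proof (rule lipschitz_onI)
    fix x y assume "x \<in> {a..b}" "y \<in> {a..b}"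
    then show "dist (H x) (H y) \<le> max B 0 * dist x y"
      using field_differentiable_bound[OF convex_real_interval(5) assms(1), of "max B 0" x y] B
      by (force simp: dist_norm)
  qed simp
  then show ?thesis by (rule lipschitz_on_imp_abs_cont_on)
qed

section \<open>Replacing a feasible pair on a subinterval\<close>

definition replace_on :: "real \<Rightarrow> real \<Rightarrow> (real \<Rightarrow> real) \<Rightarrow> (real \<Rightarrow> real) \<Rightarrow> real \<Rightarrow> real" where
  "replace_on s1 s2 f h x = (if x \<in> {s1..s2} then h x else f x)"

lemma replace_on_eq_outside:
  assumes "h s1 = f s1" "h s2 = f s2" "x \<notin> {s1<..<s2}"
  shows "replace_on s1 s2 f h x = f x"
  using assms by (auto simp: replace_on_def)

lemma abs_cont_on_replace_on:
  assumes "abs_cont_on a b f" "abs_cont_on s1 s2 h" "a \<le> s1" "s1 \<le> s2" "s2 \<le> b"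
    and "h s1 = f s1" "h s2 = f s2"
  shows "abs_cont_on a b (replace_on s1 s2 f h)"
proof -
  define p where "p x = max s1 (min s2 x)" for x
  \<comment> \<open>the difference h - f vanishes at both ends, so it can be extended by clamping\<close>
  have eq: "replace_on s1 s2 f h = (\<lambda>x. f x + (h (p x) - f (p x)))"
    using assms(6,7) by (auto simp: fun_eq_iff replace_on_def p_def)
  have "abs_cont_on s1 s2 (\<lambda>x. h x - f x)"
    using assms by (intro abs_cont_on_diff abs_cont_on_subinterval[OF assms(1)])
  moreover have "mono_on {a..b} p" by (auto simp: p_def monotone_on_def)
  moreover have "1-lipschitz_on {a..b} p" by (auto simp: p_def lipschitz_on_def dist_real_def)
  moreover have "p ` {a..b} \<subseteq> {s1..s2}" using assms(4) by (auto simp: p_def)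
  ultimately have "abs_cont_on a b (\<lambda>x. h (p x) - f (p x))"
    by (rule abs_cont_on_compose)
  then show ?thesis
    unfolding eq by (rule abs_cont_on_add[OF assms(1)])
qed

lemma deriv_replace_on:
  shows deriv_replace_on_outside: "x \<notin> {s1..s2} \<Longrightarrow> deriv (replace_on s1 s2 f h) x = deriv f x"
    and deriv_replace_on_inside: "x \<in> {s1<..<s2} \<Longrightarrow> deriv (replace_on s1 s2 f h) x = deriv h x"
proof -
  assume "x \<notin> {s1..s2}"
  then have "\<forall>\<^sub>F y in nhds x. y \<in> - {s1..s2}"
    by (intro eventually_nhds_in_open) auto
  then show "deriv (replace_on s1 s2 f h) x = deriv f x"
    by (intro deriv_cong_ev) (auto elim!: eventually_mono simp: replace_on_def)
next
  assume "x \<in> {s1<..<s2}"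
  then have "\<forall>\<^sub>F y in nhds x. y \<in> {s1<..<s2}"
    by (intro eventually_nhds_in_open) auto
  then show "deriv (replace_on s1 s2 f h) x = deriv h x"
    by (intro deriv_cong_ev) (auto elim!: eventually_mono simp: replace_on_def)
qed

lemma replace_on_measurable:
  assumes "\<rho> \<in> borel_measurable (lebesgue_on {a..b})" "continuous_on {s1..s2} \<sigma>"
  shows "replace_on s1 s2 \<rho> \<sigma> \<in> borel_measurable (lebesgue_on {a..b})"
proof -
  have "(\<lambda>x. indicator {s1..s2} x *\<^sub>R \<sigma> x) \<in> borel_measurable lborel"
    using borel_measurable_continuous_on_indicator[OF _ assms(2)] by simp
  then have "(\<lambda>x. indicator {s1..s2} x *\<^sub>R \<sigma> x) \<in> borel_measurable (lebesgue_on {a..b})"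
    by (intro measurable_restrict_space1 measurable_completion)
  then have "(\<lambda>x. if x \<in> {s1..s2} then indicator {s1..s2} x *\<^sub>R \<sigma> x else \<rho> x)
      \<in> borel_measurable (lebesgue_on {a..b})"
    by (rule measurable_If_set[OF _ assms(1)]) (simp add: sets_restrict_space_iff)
  then show ?thesis by (simp add: replace_on_def[abs_def] cong: if_cong)
qed

lemma absolutely_integrable_patch:
  fixes f h q :: "real \<Rightarrow> real"
  assumes "f absolutely_integrable_on {a..b}" "h absolutely_integrable_on {s1..s2}"
    and "a \<le> s1" "s2 \<le> b"
    and "\<And>x. x \<in> {a..b} - {s1..s2} \<Longrightarrow> q x = f x" "\<And>x. x \<in> {s1<..<s2} \<Longrightarrow> q x = h x"
  shows "q absolutely_integrable_on {a..b}"
proof -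
  have "(\<lambda>x. h x - f x) absolutely_integrable_on {s1..s2}"
    using assms(3,4) by (intro set_integral_diff(1) assms(2) absolutely_integrable_on_subinterval[OF assms(1)]) auto
  then have "(\<lambda>x. if x \<in> {s1..s2} then h x - f x else 0) absolutely_integrable_on UNIV"
    by (simp only: absolutely_integrable_restrict_UNIV)
  then have "(\<lambda>x. if x \<in> {s1..s2} then h x - f x else 0) absolutely_integrable_on {a..b}"
    by (rule absolutely_integrable_on_subinterval) simp
  then have "(\<lambda>x. f x + (if x \<in> {s1..s2} then h x - f x else 0)) absolutely_integrable_on {a..b}"
    by (rule set_integral_add(1)[OF assms(1)])
  then show ?thesis
  proof (rule absolutely_integrable_spike[of _ _ "{s1, s2}"])
    fix x assume "x \<in> {a..b} - {s1, s2}"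
    then show "q x = f x + (if x \<in> {s1..s2} then h x - f x else 0)"
      using assms(5)[of x] assms(6)[of x] by auto
  qed simp
qed

lemma has_integral_patch:
  fixes f h q :: "real \<Rightarrow> real"
  assumes "f integrable_on {a..b}" "h integrable_on {s1..s2}" "a \<le> s1" "s2 \<le> b"
    and "\<And>x. x \<in> {a..b} - {s1..s2} \<Longrightarrow> q x = f x" "\<And>x. x \<in> {s1<..<s2} \<Longrightarrow> q x = h x"
    and "t \<in> {a..b}"
  shows "(q has_integral integral {a..t} f + integral {s1..min s2 t} (\<lambda>x. h x - f x)) {a..t}"
proof -
  have "(\<lambda>x. h x - f x) integrable_on {s1..s2}"
    using assms(3,4) by (intro integrable_diff assms(2) integrable_subinterval_real[OF assms(1)]) auto
  then have "(\<lambda>x. h x - f x) integrable_on {s1..min s2 t}"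
    by (rule integrable_subinterval_real) auto
  moreover have "{s1..s2} \<inter> {a..t} = {s1..min s2 t}"
    using assms(3) by auto
  ultimately have "((\<lambda>x. h x - f x) has_integral integral {s1..min s2 t} (\<lambda>x. h x - f x)) ({s1..s2} \<inter> {a..t})"
    by (metis integrable_integral)
  then have "((\<lambda>x. if x \<in> {s1..s2} then h x - f x else 0)
      has_integral integral {s1..min s2 t} (\<lambda>x. h x - f x)) {a..t}"
    by (simp only: has_integral_restrict_Int)
  moreover have "f integrable_on {a..t}"
    using assms(7) by (intro integrable_subinterval_real[OF assms(1)]) auto
  then have "(f has_integral integral {a..t} f) {a..t}"
    by (rule integrable_integral)
  ultimately have "((\<lambda>x. f x + (if x \<in> {s1..s2} then h x - f x else 0))
      has_integral integral {a..t} f + integral {s1..min s2 t} (\<lambda>x. h x - f x)) {a..t}"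
    by (intro has_integral_add)
  then show ?thesis
  proof (rule has_integral_spike[of "{s1, s2}", rotated 2])
    fix x assume "x \<in> {a..t} - {s1, s2}"
    then show "q x = f x + (if x \<in> {s1..s2} then h x - f x else 0)"
      using assms(5)[of x] assms(6)[of x] assms(7) by auto
  qed simp
qed

lemma has_integral_binding_integrand:
  fixes H H' :: "real \<Rightarrow> real"
  assumes "0 < u" "u \<le> v" "\<And>x. x \<in> {u..v} \<Longrightarrow> (H has_real_derivative H' x) (at x)"
  shows "((\<lambda>x. (H x / x - H' x)\<^sup>2 - (H' x)\<^sup>2) has_integral (H u)\<^sup>2 / u - (H v)\<^sup>2 / v) {u..v}"
proof -
  have "((\<lambda>x. - ((H x)\<^sup>2 / x)) has_real_derivative (H x / x - H' x)\<^sup>2 - (H' x)\<^sup>2) (at x within {u..v})"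
    if "x \<in> {u..v}" for x
  proof -
    have "x \<noteq> 0" using that assms(1) by auto
    then show ?thesis
      by (auto intro!: derivative_eq_intros has_field_derivative_at_within[OF assms(3)[OF that]]
          simp: field_simps power2_eq_square)
  qed
  then show ?thesis
    using fundamental_theorem_of_calculus[OF assms(2), of "\<lambda>x. - ((H x)\<^sup>2 / x)"]
    by (simp add: has_real_derivative_iff_has_vector_derivative)
qed

lemma integrand_replace_on:
  assumes "\<And>x. x \<in> {s1..s2} \<Longrightarrow> (H has_real_derivative H' x) (at x)"
  shows integrand_replace_on_outside: "x \<notin> {s1..s2} \<Longrightarrow>
      replace_on s1 s2 \<rho> \<sigma> x - (deriv (replace_on s1 s2 F H) x)\<^sup>2 = \<rho> x - (deriv F x)\<^sup>2"
    and integrand_replace_on_inside: "x \<in> {s1<..<s2} \<Longrightarrow>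
      replace_on s1 s2 \<rho> \<sigma> x - (deriv (replace_on s1 s2 F H) x)\<^sup>2 = \<sigma> x - (H' x)\<^sup>2"
proof -
  have "deriv H x = H' x" if "x \<in> {s1<..<s2}"
    using that by (intro DERIV_imp_deriv assms) auto
  then show "x \<notin> {s1..s2} \<Longrightarrow>
      replace_on s1 s2 \<rho> \<sigma> x - (deriv (replace_on s1 s2 F H) x)\<^sup>2 = \<rho> x - (deriv F x)\<^sup>2"
    and "x \<in> {s1<..<s2} \<Longrightarrow>
      replace_on s1 s2 \<rho> \<sigma> x - (deriv (replace_on s1 s2 F H) x)\<^sup>2 = \<sigma> x - (H' x)\<^sup>2"
    by (auto simp: replace_on_def deriv_replace_on_outside deriv_replace_on_inside)
qed

lemma gfun_replace_on:
  fixes F \<rho> H H' :: "real \<Rightarrow> real"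
  assumes "0 < s1" "t1 \<le> s1" "s1 \<le> s2" "s2 \<le> t2"
    and int: "(\<lambda>x. \<rho> x - (deriv F x)\<^sup>2) integrable_on {t1..t2}"
    and H: "\<And>x. x \<in> {s1..s2} \<Longrightarrow> (H has_real_derivative H' x) (at x)"
    and ends: "H s1 = F s1" "H s2 = F s2"
    and t: "t \<in> {t1..t2}"
  shows "gfun t1 (replace_on s1 s2 F H) (replace_on s1 s2 \<rho> (\<lambda>x. (H x / x - H' x)\<^sup>2)) b t
       = gfun t1 F \<rho> b t - gfun t1 F \<rho> b (max s1 (min s2 t)) + gfun t1 F \<rho> b s1"
proof -
  define G where "G = replace_on s1 s2 F H"
  define \<sigma> where "\<sigma> = replace_on s1 s2 \<rho> (\<lambda>x. (H x / x - H' x)\<^sup>2)"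
  define qF where "qF x = \<rho> x - (deriv F x)\<^sup>2" for x
  define qH where "qH x = (H x / x - H' x)\<^sup>2 - (H' x)\<^sup>2" for x
  define c where "c = max s1 (min s2 t)"
  have c: "s1 \<le> c" "c \<le> s2" using assms(3) by (auto simp: c_def)
  have qF_int: "qF integrable_on {t1..t2}" using int by (simp add: qF_def[abs_def])
  have qH_int: "(qH has_integral (H s1)\<^sup>2 / s1 - (H u)\<^sup>2 / u) {s1..u}" if "s1 \<le> u" "u \<le> s2" for u
    unfolding qH_def using assms(1) that H by (intro has_integral_binding_integrand) auto
  have "((\<lambda>x. \<sigma> x - (deriv G x)\<^sup>2)
      has_integral integral {t1..t} qF + integral {s1..min s2 t} (\<lambda>x. qH x - qF x)) {t1..t}"
  proof (rule has_integral_patch[OF qF_int _ assms(2,4)])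
    show "qH integrable_on {s1..s2}" using qH_int[of s2] assms(3) by blast
  qed (use t integrand_replace_on[OF H] in \<open>auto simp: G_def \<sigma>_def qF_def qH_def\<close>)
  then have int_G: "integral {t1..t} (\<lambda>x. \<sigma> x - (deriv G x)\<^sup>2)
      = integral {t1..t} qF + integral {s1..min s2 t} (\<lambda>x. qH x - qF x)"
    by (rule integral_unique)
  have "integral {s1..min s2 t} (\<lambda>x. qH x - qF x)
      = ((H s1)\<^sup>2 / s1 - (H c)\<^sup>2 / c) - (integral {t1..c} qF - integral {t1..s1} qF)"
  proof (cases "t < s1")
    case True
    then show ?thesis by (simp add: c_def)
  next
    case False
    then have "min s2 t = c" using assms(3) by (auto simp: c_def)
    have "qF integrable_on {s1..c}"
      using c assms(2,4) by (intro integrable_subinterval_real[OF qF_int]) auto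
    then have "integral {s1..c} (\<lambda>x. qH x - qF x) = integral {s1..c} qH - integral {s1..c} qF"
      using qH_int[OF c] by (intro integral_diff) auto
    moreover have "integral {t1..s1} qF + integral {s1..c} qF = integral {t1..c} qF"
      using c assms(2,4)
      by (intro Henstock_Kurzweil_Integration.integral_combine integrable_subinterval_real[OF qF_int]) auto
    ultimately show ?thesis
      using integral_unique[OF qH_int[OF c]] \<open>min s2 t = c\<close> by simp
  qed
  moreover have "(G t)\<^sup>2 / t - (H c)\<^sup>2 / c = (F t)\<^sup>2 / t - (F c)\<^sup>2 / c"
    using ends assms(3) by (cases "t < s1"; cases "t > s2") (auto simp: G_def c_def replace_on_def)
  moreover have "G t1 = F t1"
    using ends assms(2) by (auto simp: G_def replace_on_def)
  ultimately show ?thesis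
    using int_G ends(1) by (simp add: gfun_def G_def[symmetric] \<sigma>_def[symmetric] qF_def[abs_def] c_def[symmetric])
qed

lemma gfun_replace_on_nonneg:
  fixes F \<rho> H H' :: "real \<Rightarrow> real"
  assumes "0 < s1" "t1 \<le> s1" "s1 \<le> s2" "s2 \<le> t2"
    and int: "(\<lambda>x. \<rho> x - (deriv F x)\<^sup>2) integrable_on {t1..t2}"
    and H: "\<And>x. x \<in> {s1..s2} \<Longrightarrow> (H has_real_derivative H' x) (at x)"
    and ends: "H s1 = F s1" "H s2 = F s2"
    and g_nonneg: "\<And>t. t \<in> {t1..t2} \<Longrightarrow> 0 \<le> gfun t1 F \<rho> b t"
    and slack: "gfun t1 F \<rho> b s2 \<le> gfun t1 F \<rho> b s1"
    and t: "t \<in> {t1..t2}"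
  shows "0 \<le> gfun t1 (replace_on s1 s2 F H) (replace_on s1 s2 \<rho> (\<lambda>x. (H x / x - H' x)\<^sup>2)) b t"
proof -
  have "0 \<le> gfun t1 F \<rho> b s1" "0 \<le> gfun t1 F \<rho> b t"
    using g_nonneg t assms(2-4) by auto
  then show ?thesis
    using gfun_replace_on[OF assms(1-4) int H ends t] slack assms(3)
    by (cases "t < s1"; cases "t > s2") (auto simp: max_def min_def)
qed

lemma feasible_replace_on:
  fixes F \<rho> H H' :: "real \<Rightarrow> real"
  assumes feas: "feasible t1 x1 t2 x2 b F \<rho>"
    and "0 < s1" "t1 \<le> s1" "s1 \<le> s2" "s2 \<le> t2"
    and H: "\<And>x. x \<in> {s1..s2} \<Longrightarrow> (H has_real_derivative H' x) (at x)"
    and H': "continuous_on {s1..s2} H'"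
    and ends: "H s1 = F s1" "H s2 = F s2"
    and slack: "gfun t1 F \<rho> b s2 \<le> gfun t1 F \<rho> b s1"
  shows "feasible t1 x1 t2 x2 b (replace_on s1 s2 F H) (replace_on s1 s2 \<rho> (\<lambda>x. (H x / x - H' x)\<^sup>2))"
proof -
  define \<sigma> where "\<sigma> x = (H x / x - H' x)\<^sup>2" for x
  have F_ac: "abs_cont_on t1 t2 F" and F_ends: "F t1 = x1" "F t2 = x2"
    and \<rho>_meas: "\<rho> \<in> borel_measurable (lebesgue_on {t1..t2})"
    and \<rho>_nonneg: "\<And>t. t \<in> {t1..t2} \<Longrightarrow> 0 \<le> \<rho> t"
    and qF_abs: "(\<lambda>x. \<rho> x - (deriv F x)\<^sup>2) absolutely_integrable_on {t1..t2}"
    and g_nonneg: "\<And>t. t \<in> {t1..t2} \<Longrightarrow> 0 \<le> gfun t1 F \<rho> b t"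
    using feas unfolding feasible_def by auto
  have "continuous_on {s1..s2} H"
    by (rule has_real_derivative_imp_continuous_on) (rule H)
  then have \<sigma>_cont: "continuous_on {s1..s2} \<sigma>"
    using H' assms(2) unfolding \<sigma>_def by (intro continuous_intros) auto
  have "abs_cont_on s1 s2 H"
  proof (rule continuous_derivative_imp_abs_cont_on[OF _ H'])
    fix x assume "x \<in> {s1..s2}"
    then show "(H has_real_derivative H' x) (at x within {s1..s2})"
      by (rule has_field_derivative_at_within[OF H])
  qed
  then have "abs_cont_on t1 t2 (replace_on s1 s2 F H)"
    by (rule abs_cont_on_replace_on[OF F_ac _ assms(3-5) ends])
  moreover have "replace_on s1 s2 F H t1 = x1" "replace_on s1 s2 F H t2 = x2"
    using F_ends ends assms(3-5) by (simp_all add: replace_on_eq_outside)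
  moreover have "replace_on s1 s2 \<rho> \<sigma> \<in> borel_measurable (lebesgue_on {t1..t2})"
    by (rule replace_on_measurable[OF \<rho>_meas \<sigma>_cont])
  moreover have "\<forall>t\<in>{t1..t2}. 0 \<le> replace_on s1 s2 \<rho> \<sigma> t"
    using \<rho>_nonneg by (simp add: replace_on_def \<sigma>_def)
  moreover have "(\<lambda>x. replace_on s1 s2 \<rho> \<sigma> x - (deriv (replace_on s1 s2 F H) x)\<^sup>2)
      absolutely_integrable_on {t1..t2}"
  proof (rule absolutely_integrable_patch[OF qF_abs _ assms(3,5)])
    show "(\<lambda>x. \<sigma> x - (H' x)\<^sup>2) absolutely_integrable_on {s1..s2}"
      using \<sigma>_cont H' by (intro absolutely_integrable_continuous_real continuous_intros)
    show "replace_on s1 s2 \<rho> \<sigma> x - (deriv (replace_on s1 s2 F H) x)\<^sup>2 = \<rho> x - (deriv F x)\<^sup>2"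
      if "x \<in> {t1..t2} - {s1..s2}" for x
      using that by (intro integrand_replace_on_outside[OF H]) auto
    show "replace_on s1 s2 \<rho> \<sigma> x - (deriv (replace_on s1 s2 F H) x)\<^sup>2 = \<sigma> x - (H' x)\<^sup>2"
      if "x \<in> {s1<..<s2}" for x
      by (intro integrand_replace_on_inside[OF H] that)
  qed
  moreover have "\<forall>t\<in>{t1..t2}. 0 \<le> gfun t1 (replace_on s1 s2 F H) (replace_on s1 s2 \<rho> \<sigma>) b t"
    using qF_abs g_nonneg unfolding \<sigma>_def[abs_def]
    by (intro ballI gfun_replace_on_nonneg[OF assms(2-5) _ H ends _ slack])
       (auto simp: absolutely_integrable_on_def)
  ultimately show ?thesis
    unfolding feasible_def \<sigma>_def[abs_def] by blast
qed

lemma I2_eq_integral: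
  assumes "(\<lambda>t. \<rho> t powr (3/2)) integrable_on {a..b}"
  shows "I2 a b \<rho> = ennreal (4/3 * integral {a..b} (\<lambda>t. \<rho> t powr (3/2)))"
proof -
  have "(\<integral>\<^sup>+ t. ennreal (\<rho> t powr (3/2)) * indicator {a..b} t \<partial>lborel)
      = ennreal (integral {a..b} (\<lambda>t. \<rho> t powr (3/2)))"
    by (rule nn_integral_has_integral_lebesgue'[OF _ integrable_integral[OF assms]]) simp
  then show ?thesis
    unfolding I2_def by (simp add: mult.commute flip: ennreal_mult')
qed

lemma power2_powr_three_halves:
  fixes y :: real
  assumes "0 \<le> y"
  shows "(y\<^sup>2) powr (3/2) = y ^ 3"
proof -
  have "(y\<^sup>2) powr (3/2) = (y powr 2) powr (3/2)"
    using powr_realpow'[of y 2] assms by simp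
  also have "\<dots> = y powr 3"
    by (simp add: powr_powr)
  also have "\<dots> = y ^ 3"
    using powr_realpow'[of y 3] assms by simp
  finally show ?thesis .
qed

section \<open>A minimizer on an interval where the constraint is binding\<close>

locale binding_interval =
  fixes t1 x1 t2 x2 b s1 s2 :: real and F \<rho> R :: "real \<Rightarrow> real"
  assumes t1_pos: "0 < t1"
    and s1_ge: "t1 \<le> s1" and s1_less_s2: "s1 < s2" and s2_le: "s2 \<le> t2"
    and feasible: "feasible t1 x1 t2 x2 b F \<rho>"
    and minimal: "\<And>G \<sigma>. feasible t1 x1 t2 x2 b G \<sigma> \<Longrightarrow> I2 t1 t2 \<rho> \<le> I2 t1 t2 \<sigma>"
    and R_antimono: "antimono_on {t1<..<t2} R"
    and R_deriv: "\<And>x. x \<in> {t1<..<t2} \<Longrightarrow> isCont R x \<Longrightarrow> (F has_real_derivative R x) (at x)"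
    and deriv_le: "\<And>x D. x \<in> {t1..t2} \<Longrightarrow> (F has_real_derivative D) (at x within {t1..t2}) \<Longrightarrow> D \<le> F x / x"
    and rho_antimono: "antimono_on {t1..t2} \<rho>"
    and binding: "\<And>t. t \<in> {s1..s2} \<Longrightarrow> gfun t1 F \<rho> b t = 0"
begin

lemma s1_pos: "0 < s1"
  using t1_pos s1_ge by simp

lemma rho_nonneg: "t \<in> {t1..t2} \<Longrightarrow> 0 \<le> \<rho> t"
  using feasible by (simp add: feasible_def)

lemma integrand_integrable: "(\<lambda>\<tau>. \<rho> \<tau> - (deriv F \<tau>)\<^sup>2) integrable_on {t1..t2}"
  using feasible by (simp add: feasible_def absolutely_integrable_on_def)

definition jumps :: "real set" where
  "jumps = {x \<in> {t1<..<t2}. \<not> isCont R x} \<union> {x \<in> {t1<..<t2}. \<not> isCont \<rho> x}"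

lemma countable_jumps: "countable jumps"
proof -
  have "antimono_on {t1<..<t2} \<rho>"
    using rho_antimono by (rule monotone_on_subset) auto
  then have "countable {x \<in> {t1<..<t2}. \<not> isCont \<rho> x}"
    by (rule antimono_on_ctble_discont_open[rotated]) simp
  moreover have "countable {x \<in> {t1<..<t2}. \<not> isCont R x}"
    by (rule antimono_on_ctble_discont_open[OF _ R_antimono]) simp
  ultimately show ?thesis by (simp add: jumps_def)
qed

lemma regular_point:
  assumes "x \<in> {s1<..<s2} - jumps"
  shows "t1 < x" "x < t2" "isCont R x" "isCont \<rho> x" "(F has_real_derivative R x) (at x)"
proof -
  show "t1 < x" "x < t2" using assms s1_ge s2_le by auto
  then show "isCont R x" "isCont \<rho> x" using assms by (auto simp: jumps_def)
  then show "(F has_real_derivative R x) (at x)"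
    using R_deriv \<open>t1 < x\<close> \<open>x < t2\<close> by auto
qed

lemma rho_eq_square:
  assumes x: "x \<in> {s1<..<s2} - jumps"
  shows "\<rho> x = (F x / x - R x)\<^sup>2"
proof -
  note reg = regular_point[OF x]
  have "x \<noteq> 0" using reg(1) t1_pos by simp
  define f where "f \<tau> = \<rho> \<tau> - (R \<tau>)\<^sup>2" for \<tau>
  have N: "negligible (jumps \<union> {t1, t2})"
    using countable_jumps by (intro countable_imp_negligible) auto
  have f_eq: "\<rho> \<tau> - (deriv F \<tau>)\<^sup>2 = f \<tau>" if "\<tau> \<in> {t1..t2} - (jumps \<union> {t1, t2})" for \<tau>
  proof -
    have "\<tau> \<in> {t1<..<t2}" "isCont R \<tau>" using that by (auto simp: jumps_def)
    then show ?thesis by (simp add: f_def DERIV_imp_deriv[OF R_deriv])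
  qed
  have f_int: "f integrable_on {t1..t2}"
    by (rule integrable_spike[OF integrand_integrable N]) (use f_eq in auto)
  have "integral {t1..t} f = (F t1)\<^sup>2 / t1 - b - (F t)\<^sup>2 / t" if "t \<in> {s1<..<s2}" for t
  proof -
    have "integral {t1..t} (\<lambda>\<tau>. \<rho> \<tau> - (deriv F \<tau>)\<^sup>2) = integral {t1..t} f"
      by (rule integral_spike[OF N]) (use f_eq that s2_le in auto)
    moreover have "gfun t1 F \<rho> b t = 0" using binding that by auto
    ultimately show ?thesis by (simp add: gfun_def)
  qed
  moreover have "\<forall>\<^sub>F t in nhds x. t \<in> {s1<..<s2}"
    using x by (intro eventually_nhds_in_open) auto
  ultimately have ev: "\<forall>\<^sub>F t in nhds x. integral {t1..t} f = (F t1)\<^sup>2 / t1 - b - (F t)\<^sup>2 / t"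
    by (auto elim: eventually_mono)
  have der: "((\<lambda>t. (F t1)\<^sup>2 / t1 - b - (F t)\<^sup>2 / t)
      has_real_derivative (F x / x)\<^sup>2 - 2 * F x * R x / x) (at x)"
    using reg(5) \<open>x \<noteq> 0\<close>
    by (auto intro!: derivative_eq_intros simp: field_simps power2_eq_square)
  have "isCont f x"
    unfolding f_def using reg(3,4) by (intro continuous_intros)
  then have "f x = (F x / x)\<^sup>2 - 2 * F x * R x / x"
    by (rule indefinite_integral_DERIV_eq[OF f_int reg(1,2) _ ev der])
  then show ?thesis
    using \<open>x \<noteq> 0\<close> by (simp add: f_def power2_eq_square field_simps)
qed

lemma sqrt_rho_eq:
  assumes x: "x \<in> {s1<..<s2} - jumps"
  shows "sqrt (\<rho> x) = F x / x - R x"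
proof -
  have "x \<in> {t1..t2}" using regular_point[OF x] by simp
  then have "R x \<le> F x / x"
    using deriv_le has_field_derivative_at_within[OF regular_point(5)[OF x]] by blast
  then show ?thesis using rho_eq_square[OF x] by simp
qed

lemma sqrt_rho_div_has_integral:
  assumes t: "t \<in> {s1..s2}"
  shows "((\<lambda>\<tau>. sqrt (\<rho> \<tau>) / \<tau>) has_integral F s1 / s1 - F t / t) {s1..t}"
proof -
  have "antimono_on {s1..t} (\<lambda>\<tau>. sqrt (\<rho> \<tau>) / \<tau>)"
  proof (rule monotone_onI)
    fix u v assume "u \<in> {s1..t}" "v \<in> {s1..t}" "u \<le> v"
    moreover have "\<rho> v \<le> \<rho> u" "0 \<le> \<rho> v"
      using calculation t s1_ge s2_le rho_antimono rho_nonneg by (auto simp: monotone_on_def)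
    ultimately show "sqrt (\<rho> u) / u \<ge> sqrt (\<rho> v) / v"
      using s1_pos by (intro frac_le) auto
  qed
  then have int: "(\<lambda>\<tau>. sqrt (\<rho> \<tau>) / \<tau>) integrable_on {s1..t}"
    by (rule integrable_on_antimono_on)
  have "continuous_on {t1..t2} F"
    using feasible by (simp add: feasible_def abs_cont_on_imp_continuous_on)
  then have "continuous_on {s1..t} F"
    by (rule continuous_on_subset) (use t s1_ge s2_le in auto)
  then have cont: "continuous_on {s1..t} (\<lambda>\<tau>. - (F \<tau> / \<tau>))"
    using s1_pos by (intro continuous_intros) auto
  have der: "((\<lambda>\<tau>. - (F \<tau> / \<tau>)) has_real_derivative sqrt (\<rho> x) / x) (at x) \<and> isCont (\<lambda>\<tau>. sqrt (\<rho> \<tau>) / \<tau>) x"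
    if "x \<in> {s1<..<t} - jumps" for x
  proof -
    have x: "x \<in> {s1<..<s2} - jumps" "x \<noteq> 0" using that t s1_pos by auto
    have "((\<lambda>\<tau>. - (F \<tau> / \<tau>)) has_real_derivative (F x / x - R x) / x) (at x)"
      using regular_point(5)[OF x(1)] x(2)
      by (auto intro!: derivative_eq_intros simp: field_simps power2_eq_square)
    moreover have "isCont (\<lambda>\<tau>. sqrt (\<rho> \<tau>) / \<tau>) x"
      using regular_point(4)[OF x(1)] x(2) by (intro continuous_intros)
    ultimately show ?thesis by (simp add: sqrt_rho_eq[OF x(1)])
  qed
  have "s1 \<le> t" using t by simp
  from fundamental_theorem_of_calculus_countable[OF this int cont countable_jumps der]
  show ?thesis by simp
qed

lemma sqrt_inverse_gap_pos: "0 < 1 / sqrt s1 - 1 / sqrt s2"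
proof -
  have "sqrt s1 < sqrt s2" using s1_less_s2 by simp
  then have "1 / sqrt s2 < 1 / sqrt s1"
    using s1_pos by (intro divide_strict_left_mono) auto
  then show ?thesis by simp
qed

(* c1 is chosen so that alpha / t and sqrt rho / t have the same integral over [s1,s2] *)
definition c1 :: real where
  "c1 = (F s1 / s1 - F s2 / s2) / (1 / sqrt s1 - 1 / sqrt s2)"

definition c2 :: real where
  "c2 = F s1 / s1 - c1 / sqrt s1"

definition H :: "real \<Rightarrow> real" where
  "H t = c1 * sqrt t + c2 * t"

definition H' :: "real \<Rightarrow> real" where
  "H' t = c1 / (2 * sqrt t) + c2"

definition \<alpha> :: "real \<Rightarrow> real" where
  "\<alpha> t = c1 / (2 * sqrt t)"

lemma c1_gap: "c1 / sqrt s1 - c1 / sqrt s2 = F s1 / s1 - F s2 / s2"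
proof -
  have "c1 / sqrt s1 - c1 / sqrt s2 = c1 * (1 / sqrt s1 - 1 / sqrt s2)"
    by (simp add: algebra_simps)
  then show ?thesis
    using sqrt_inverse_gap_pos by (simp add: c1_def)
qed

lemma c1_nonneg: "0 \<le> c1"
proof -
  have "0 \<le> F s1 / s1 - F s2 / s2"
  proof (rule has_integral_nonneg[OF sqrt_rho_div_has_integral])
    show "0 \<le> sqrt (\<rho> \<tau>) / \<tau>" if "\<tau> \<in> {s1..s2}" for \<tau>
      using that s1_pos s1_ge s2_le rho_nonneg[of \<tau>] by simp
  qed (use s1_less_s2 in auto)
  then show ?thesis
    using sqrt_inverse_gap_pos by (simp add: c1_def)
qed

lemma alpha_nonneg: "0 \<le> t \<Longrightarrow> 0 \<le> \<alpha> t"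
  using c1_nonneg by (simp add: \<alpha>_def)

lemma H_has_derivative: "0 < x \<Longrightarrow> (H has_real_derivative H' x) (at x)"
  unfolding H_def[abs_def] H'_def by (auto intro!: derivative_eq_intros simp: field_simps)

lemma H_eq_alpha: "0 < x \<Longrightarrow> H x / x - H' x = \<alpha> x"
  unfolding H_def H'_def \<alpha>_def by (simp add: field_simps real_div_sqrt)

lemma H_s1: "H s1 = F s1"
  using s1_pos by (simp add: H_def c2_def field_simps real_div_sqrt)

lemma H_s2: "H s2 = F s2"
proof -
  have "0 < s2" using s1_pos s1_less_s2 by simp
  have "F s2 / s2 = c2 + c1 / sqrt s2"
    using c1_gap by (simp add: c2_def)
  then have "F s2 = c1 * (s2 / sqrt s2) + c2 * s2"
    using \<open>0 < s2\<close> by (simp add: field_simps)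
  also have "s2 / sqrt s2 = sqrt s2"
    using \<open>0 < s2\<close> by (simp add: real_div_sqrt)
  finally show ?thesis by (simp add: H_def)
qed

lemma alpha_div_has_integral:
  assumes "t \<in> {s1..s2}"
  shows "((\<lambda>\<tau>. \<alpha> \<tau> / \<tau>) has_integral c1 / sqrt s1 - c1 / sqrt t) {s1..t}"
proof -
  have "((\<lambda>\<tau>. - c1 / sqrt \<tau>) has_vector_derivative \<alpha> x / x) (at x within {s1..t})"
    if "x \<in> {s1..t}" for x
  proof -
    have "0 < x" using that s1_pos by simp
    then have "((\<lambda>\<tau>. - c1 / sqrt \<tau>) has_real_derivative \<alpha> x / x) (at x)"
      unfolding \<alpha>_def by (auto intro!: derivative_eq_intros simp: field_simps)
    then show ?thesis
      by (simp add: has_real_derivative_iff_has_vector_derivative has_vector_derivative_at_within)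
  qed
  from fundamental_theorem_of_calculus[OF _ this] assms show ?thesis by simp
qed

lemma competitor_feasible:
  "feasible t1 x1 t2 x2 b (replace_on s1 s2 F H) (replace_on s1 s2 \<rho> (\<lambda>\<tau>. (\<alpha> \<tau>)\<^sup>2))"
proof -
  have "continuous_on {s1..s2} H'"
    using s1_pos unfolding H'_def by (intro continuous_intros) auto
  moreover have "gfun t1 F \<rho> b s2 \<le> gfun t1 F \<rho> b s1"
    using binding s1_less_s2 by simp
  ultimately have "feasible t1 x1 t2 x2 b (replace_on s1 s2 F H)
      (replace_on s1 s2 \<rho> (\<lambda>\<tau>. (H \<tau> / \<tau> - H' \<tau>)\<^sup>2))"
    using H_has_derivative s1_pos H_s1 H_s2
    by (intro feasible_replace_on[OF feasible s1_pos s1_ge less_imp_le[OF s1_less_s2] s2_le]) auto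
  moreover have "replace_on s1 s2 \<rho> (\<lambda>\<tau>. (H \<tau> / \<tau> - H' \<tau>)\<^sup>2) = replace_on s1 s2 \<rho> (\<lambda>\<tau>. (\<alpha> \<tau>)\<^sup>2)"
    using H_eq_alpha s1_pos by (auto simp: replace_on_def fun_eq_iff)
  ultimately show ?thesis by simp
qed

lemma rho_powr_integrable: "(\<lambda>\<tau>. \<rho> \<tau> powr (3/2)) integrable_on {t1..t2}"
proof (rule integrable_on_antimono_on, rule monotone_onI)
  fix u v assume "u \<in> {t1..t2}" "v \<in> {t1..t2}" "u \<le> v"
  then have "\<rho> v \<le> \<rho> u" "0 \<le> \<rho> v"
    using rho_antimono rho_nonneg by (auto simp: monotone_on_def)
  then show "\<rho> u powr (3/2) \<ge> \<rho> v powr (3/2)" by (intro powr_mono2) auto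
qed

lemma alpha_cube_integrable: "(\<lambda>\<tau>. (\<alpha> \<tau>) ^ 3) integrable_on {s1..s2}"
  using s1_pos unfolding \<alpha>_def by (intro integrable_continuous_real continuous_intros) auto

lemma integral_rho_powr_le:
  "integral {s1..s2} (\<lambda>\<tau>. \<rho> \<tau> powr (3/2)) \<le> integral {s1..s2} (\<lambda>\<tau>. (\<alpha> \<tau>) ^ 3)"
proof -
  define \<sigma> where "\<sigma> = replace_on s1 s2 \<rho> (\<lambda>\<tau>. (\<alpha> \<tau>)\<^sup>2)"
  define I\<rho> where "I\<rho> = integral {t1..t2} (\<lambda>\<tau>. \<rho> \<tau> powr (3/2))"
  define D where "D = integral {s1..s2} (\<lambda>\<tau>. (\<alpha> \<tau>) ^ 3 - \<rho> \<tau> powr (3/2))"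
  have \<sigma>_has: "((\<lambda>\<tau>. \<sigma> \<tau> powr (3/2)) has_integral I\<rho> + D) {t1..t2}"
  proof -
    have "((\<lambda>\<tau>. \<sigma> \<tau> powr (3/2)) has_integral I\<rho> + integral {s1..min s2 t2}
        (\<lambda>\<tau>. (\<alpha> \<tau>) ^ 3 - \<rho> \<tau> powr (3/2))) {t1..t2}"
      unfolding I\<rho>_def
    proof (rule has_integral_patch[OF rho_powr_integrable alpha_cube_integrable s1_ge s2_le])
      show "\<sigma> \<tau> powr (3/2) = \<rho> \<tau> powr (3/2)" if "\<tau> \<in> {t1..t2} - {s1..s2}" for \<tau>
        using that by (auto simp: \<sigma>_def replace_on_def)
      show "\<sigma> \<tau> powr (3/2) = (\<alpha> \<tau>) ^ 3" if "\<tau> \<in> {s1<..<s2}" for \<tau>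
        using that s1_pos alpha_nonneg[of \<tau>]
        by (simp add: \<sigma>_def replace_on_def power2_powr_three_halves)
    qed (use s1_less_s2 t1_pos s1_ge s2_le in auto)
    then show ?thesis using s2_le by (simp add: D_def min_absorb1)
  qed
  have "I2 t1 t2 \<rho> \<le> I2 t1 t2 \<sigma>"
    using minimal competitor_feasible by (simp add: \<sigma>_def)
  moreover have "I2 t1 t2 \<rho> = ennreal (4/3 * I\<rho>)"
    unfolding I\<rho>_def by (rule I2_eq_integral[OF rho_powr_integrable])
  moreover have "I2 t1 t2 \<sigma> = ennreal (4/3 * (I\<rho> + D))"
    using I2_eq_integral[OF has_integral_integrable[OF \<sigma>_has]] integral_unique[OF \<sigma>_has] by simp
  moreover have "0 \<le> I\<rho> + D"
    using \<sigma>_has by (rule has_integral_nonneg) simp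
  ultimately have "0 \<le> D" by simp
  moreover have \<rho>_s: "(\<lambda>\<tau>. \<rho> \<tau> powr (3/2)) integrable_on {s1..s2}"
    using s1_ge s2_le by (intro integrable_subinterval_real[OF rho_powr_integrable]) auto
  ultimately show ?thesis
    unfolding D_def using integral_diff[OF alpha_cube_integrable \<rho>_s] by simp
qed

(* y^3 - alpha^3 - 3 alpha^2 (y - alpha) for y = sqrt rho: the gap between the cube function
   and its tangent line at alpha *)
definition tangent_gap :: "real \<Rightarrow> real" where
  "tangent_gap \<tau> = (sqrt (\<rho> \<tau>) - \<alpha> \<tau>)\<^sup>2 * (sqrt (\<rho> \<tau>) + 2 * \<alpha> \<tau>)"

lemma tangent_gap_nonneg: "\<tau> \<in> {s1..s2} \<Longrightarrow> 0 \<le> tangent_gap \<tau>"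
  using s1_pos s1_ge s2_le rho_nonneg[of \<tau>] alpha_nonneg[of \<tau>]
  unfolding tangent_gap_def by (intro mult_nonneg_nonneg) auto

lemma tangent_gap_has_integral:
  "(tangent_gap has_integral
      integral {s1..s2} (\<lambda>\<tau>. \<rho> \<tau> powr (3/2)) - integral {s1..s2} (\<lambda>\<tau>. (\<alpha> \<tau>) ^ 3)) {s1..s2}"
proof -
  have eq: "tangent_gap \<tau> = \<rho> \<tau> powr (3/2) - (\<alpha> \<tau>) ^ 3
      - (3 * c1\<^sup>2 / 4) * (sqrt (\<rho> \<tau>) / \<tau> - \<alpha> \<tau> / \<tau>)" if "\<tau> \<in> {s1..s2}" for \<tau>
  proof -
    define y where "y = sqrt (\<rho> \<tau>)"
    have "0 < \<tau>" "0 \<le> \<rho> \<tau>" using that s1_pos s1_ge s2_le rho_nonneg[of \<tau>] by auto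
    then have "\<rho> \<tau> powr (3/2) = y ^ 3"
      using power2_powr_three_halves[of y] by (simp add: y_def)
    moreover have "(\<alpha> \<tau>)\<^sup>2 = c1\<^sup>2 / (4 * \<tau>)"
      using \<open>0 < \<tau>\<close> by (simp add: \<alpha>_def power_divide power_mult_distrib)
    ultimately show ?thesis
      using \<open>0 < \<tau>\<close> unfolding tangent_gap_def y_def[symmetric]
      by (simp add: field_simps power2_eq_square power3_eq_cube)
  qed
  have "((\<lambda>\<tau>. \<rho> \<tau> powr (3/2) - (\<alpha> \<tau>) ^ 3 - (3 * c1\<^sup>2 / 4) * (sqrt (\<rho> \<tau>) / \<tau> - \<alpha> \<tau> / \<tau>))
      has_integral integral {s1..s2} (\<lambda>\<tau>. \<rho> \<tau> powr (3/2)) - integral {s1..s2} (\<lambda>\<tau>. (\<alpha> \<tau>) ^ 3)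
        - (3 * c1\<^sup>2 / 4) * ((F s1 / s1 - F s2 / s2) - (c1 / sqrt s1 - c1 / sqrt s2))) {s1..s2}"
  proof (intro has_integral_diff has_integral_mult_right integrable_integral alpha_cube_integrable)
    show "(\<lambda>\<tau>. \<rho> \<tau> powr (3/2)) integrable_on {s1..s2}"
      using s1_ge s2_le by (intro integrable_subinterval_real[OF rho_powr_integrable]) auto
    show "((\<lambda>\<tau>. sqrt (\<rho> \<tau>) / \<tau>) has_integral F s1 / s1 - F s2 / s2) {s1..s2}"
      using s1_less_s2 by (intro sqrt_rho_div_has_integral) auto
    show "((\<lambda>\<tau>. \<alpha> \<tau> / \<tau>) has_integral c1 / sqrt s1 - c1 / sqrt s2) {s1..s2}"
      using s1_less_s2 by (intro alpha_div_has_integral) auto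
  qed
  \<comment> \<open>by the choice of c1 the linear term integrates to zero\<close>
  moreover have "(F s1 / s1 - F s2 / s2) - (c1 / sqrt s1 - c1 / sqrt s2) = 0"
    using c1_gap by simp
  ultimately show ?thesis
    by (subst has_integral_cong[OF eq]) simp_all
qed

lemma sqrt_rho_eq_alpha:
  assumes x: "x \<in> {s1<..<s2} - jumps"
  shows "sqrt (\<rho> x) = \<alpha> x"
proof -
  have "integral {s1..s2} tangent_gap = 0"
    using integral_unique[OF tangent_gap_has_integral] integral_rho_powr_le
      has_integral_nonneg[OF tangent_gap_has_integral tangent_gap_nonneg] by simp
  moreover have "isCont tangent_gap x"
    using regular_point[OF x] s1_pos x unfolding tangent_gap_def \<alpha>_def
    by (intro continuous_intros) auto
  ultimately have "tangent_gap x = 0"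
    using nonneg_zero_integral_imp_zero_isCont[OF has_integral_integrable[OF tangent_gap_has_integral]
        _ tangent_gap_nonneg] x
    by auto
  define y where "y = sqrt (\<rho> x)"
  have "(y - \<alpha> x)\<^sup>2 = 0 \<or> y + 2 * \<alpha> x = 0"
    using \<open>tangent_gap x = 0\<close> by (simp add: tangent_gap_def y_def)
  moreover have "0 \<le> y" "0 \<le> \<alpha> x"
    using x s1_pos s1_ge s2_le rho_nonneg[of x] alpha_nonneg[of x] by (auto simp: y_def)
  ultimately show ?thesis by (auto simp: y_def[symmetric])
qed

lemma F_eq_H:
  assumes t: "t \<in> {s1..s2}"
  shows "F t = H t"
proof -
  have "0 < t" using t s1_pos by simp
  have "negligible (jumps \<union> {s1, t})"
    using countable_jumps by (intro countable_imp_negligible) auto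
  then have "integral {s1..t} (\<lambda>\<tau>. \<alpha> \<tau> / \<tau>) = integral {s1..t} (\<lambda>\<tau>. sqrt (\<rho> \<tau>) / \<tau>)"
    by (rule integral_spike) (use t sqrt_rho_eq_alpha in auto)
  then have "F s1 / s1 - F t / t = c1 / sqrt s1 - c1 / sqrt t"
    using integral_unique[OF sqrt_rho_div_has_integral[OF t]]
      integral_unique[OF alpha_div_has_integral[OF t]] by simp
  then have "F t = c1 * (t / sqrt t) + c2 * t"
    using \<open>0 < t\<close> by (simp add: c2_def field_simps)
  then show ?thesis
    using \<open>0 < t\<close> by (simp add: H_def real_div_sqrt)
qed

lemma rho_eq:
  assumes x: "x \<in> {s1<..<s2}"
  shows "\<rho> x = (F x / x - deriv F x)\<^sup>2"
proof -
  have "0 < x" using x s1_pos by simp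
  have "\<rho> x = (\<alpha> x)\<^sup>2"
  proof (rule antimono_on_eq_isCont_off_countable[OF _ countable_jumps x])
    show "antimono_on {s1<..<s2} \<rho>"
      by (rule monotone_on_subset[OF rho_antimono]) (use s1_ge s2_le in auto)
    show "isCont (\<lambda>\<tau>. (\<alpha> \<tau>)\<^sup>2) x"
      using \<open>0 < x\<close> unfolding \<alpha>_def by (intro continuous_intros) auto
    show "\<rho> y = (\<alpha> y)\<^sup>2" if "y \<in> {s1<..<s2} - jumps" for y
      using sqrt_rho_eq_alpha[OF that] rho_nonneg[of y] that s1_ge s2_le
      by (metis DiffD1 atLeastAtMost_iff greaterThanLessThan_iff less_imp_le order_trans real_sqrt_pow2)
  qed
  moreover have "deriv F x = H' x"
  proof -
    have "\<forall>\<^sub>F \<tau> in nhds x. \<tau> \<in> {s1<..<s2}"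
      using x by (intro eventually_nhds_in_open) auto
    then have "\<forall>\<^sub>F \<tau> in nhds x. F \<tau> = H \<tau>"
      by (auto elim!: eventually_mono intro: F_eq_H)
    then have "deriv F x = deriv H x" by (rule deriv_cong_ev) simp
    then show ?thesis using H_has_derivative[OF \<open>0 < x\<close>] by (simp add: DERIV_imp_deriv)
  qed
  ultimately show ?thesis
    using H_eq_alpha[OF \<open>0 < x\<close>] F_eq_H[of x] x by simp
qed

lemma minimizer_shape:
  "\<exists>c1 c2. (\<forall>t\<in>{s1..s2}. F t = c1 * sqrt t + c2 * t) \<and>
           (\<forall>t\<in>{s1<..<s2}. \<rho> t = (F t / t - deriv F t)\<^sup>2)"
  using F_eq_H rho_eq unfolding H_def by blast

end

theorem lemma13:
  fixes t1 x1 t2 x2 b s1 s2 :: real and F \<rho> :: "real \<Rightarrow> real"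
  assumes "0 < t1" and "t1 < t2" and "x1 / t1 > x2 / t2"
    and "0 \<le> b" and "b \<le> (x2 - x1)\<^sup>2 / (t2 - t1) + x1\<^sup>2 / t1 - x2\<^sup>2 / t2"
    and "feasible t1 x1 t2 x2 b F \<rho>"
    and "\<forall>G \<sigma>. feasible t1 x1 t2 x2 b G \<sigma> \<longrightarrow> I2 t1 t2 \<rho> \<le> I2 t1 t2 \<sigma>"
    and "concave_on {t1..t2} F"
    and "\<forall>t\<in>{t1..t2}. \<forall>D. (F has_real_derivative D) (at t within {t1..t2}) \<longrightarrow> D \<le> F t / t"
    and "antimono_on {t1..t2} \<rho>"
    and "t1 \<le> s1" and "s1 \<le> s2" and "s2 \<le> t2"
    and "\<forall>t\<in>{s1..s2}. gfun t1 F \<rho> b t = 0"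
  shows "\<exists>c1 c2. (\<forall>t\<in>{s1..s2}. F t = c1 * sqrt t + c2 * t) \<and>
                (\<forall>t\<in>{s1<..<s2}. \<rho> t = (F t / t - deriv F t)\<^sup>2)"
proof (cases "s1 = s2")
  case True
  then show ?thesis
    using assms(1,11) by (intro exI[of _ 0] exI[of _ "F s1 / s1"]) auto
next
  case False
  then have "s1 < s2" using assms(12) by simp
  obtain R where "antimono_on {t1<..<t2} R"
    and "\<And>x. x \<in> {t1<..<t2} \<Longrightarrow> isCont R x \<Longrightarrow> (F has_real_derivative R x) (at x)"
    using concave_on_antimono_derivative[OF assms(8)] by blast
  then interpret binding_interval t1 x1 t2 x2 b s1 s2 F \<rho> R
    by (intro binding_interval.intro assms(1,6,10,11,13) \<open>s1 < s2\<close>) (use assms(7,9,14) in auto)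
  show ?thesis by (rule minimizer_shape)
qed

end
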